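(* Let $p>3$ and $\sigma_c=\frac12-\frac1{p-1}$. Let $T_*>0$, let $\lambda:[0,T_* )\to(0,\infty)$ and $\tau:[0,T_* )\to\mathbb{R}$ be functions, and let $\eta:\mathbb{R}\to\mathbb{C}$. Then the function $$\psi(x,t)=\lambda(t)^{1/(p-1)}e^{i\tau(t)}\eta(\lambda(t)x)$$ solves the equation $i\partial_t\psi+\partial_x^2\psi+\delta|\psi|^{p-1}\psi=0$ on $[0,T_* )$ with $\lim_{t\nearrow T_*}\lambda(t)=+\infty$ if and only if there exist $h>0$ and $\kappa\in\mathbb{R}$ such that $$\lambda(t)=\frac{1}{\sqrt{2h(T_*-t)}},\qquad \tau(t)=\frac{\kappa}{2h}\ln\Big(\frac{T_*}{T_*-t}\Big)+\tau(0),$$ and $\eta$ solves the stationary equation $$(\kappa+ih\sigma_c)\eta-ih\Lambda_z\eta-\eta_{zz}-\delta|\eta|^{p-1}\eta=0,\qquad \Lambda_z=\tfrac12+z\partial_z .$$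
   Context: Here $\delta=\delta(x)$ is the Dirac delta at the origin. The equation $i\partial_t\psi+\partial_x^2\psi+\delta|\psi|^{p-1}\psi=0$ (for a complex-valued $\psi(x,t)$, $x\in\mathbb{R}$) means: $i\partial_t\psi+\partial_x^2\psi=0$ for $x\neq0$, together with the jump conditions at $x=0$: $\psi(0-,t)=\psi(0+,t)=:\psi(0,t)$ and $\partial_x\psi(0+,t)-\partial_x\psi(0-,t)=-|\psi(0,t)|^{p-1}\psi(0,t)$, where $f(0\pm)$ denote one-sided limits. Similarly, the stationary equation $(\kappa+ih\sigma)\eta-ih\Lambda_z\eta-\eta_{zz}-\delta|\eta|^{p-1}\eta=0$ means that the equation without the $\delta$ term holds for $z\neq0$, $\eta$ is continuous at $0$, and $\eta_z(0+)-\eta_z(0-)=-|\eta(0)|^{p-1}\eta(0)$. *)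

theory Defs
  imports "HOL-Analysis.Analysis"
begin

definition sigma_c :: "real \<Rightarrow> real" where
  "sigma_c p = 1/2 - 1/(p - 1)"

definition dx :: "(real \<Rightarrow> real \<Rightarrow> complex) \<Rightarrow> real \<Rightarrow> real \<Rightarrow> complex" where
  "dx \<psi> t x = vector_derivative (\<lambda>y. \<psi> y t) (at x)"

definition dxx :: "(real \<Rightarrow> real \<Rightarrow> complex) \<Rightarrow> real \<Rightarrow> real \<Rightarrow> complex" where
  "dxx \<psi> t x = vector_derivative (\<lambda>y. dx \<psi> t y) (at x)"

definition dt :: "real \<Rightarrow> (real \<Rightarrow> real \<Rightarrow> complex) \<Rightarrow> real \<Rightarrow> real \<Rightarrow> complex" where
  "dt T \<psi> x t = vector_derivative (\<lambda>s. \<psi> x s) (at t within {0..<T})"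

text \<open>psi solves  i psi_t + psi_xx + delta |psi|^(p-1) psi = 0  on [0,T):
  the free equation holds for x \<noteq> 0, psi(.,t) is continuous at 0 (its value at 0
  being the common one-sided limit), and the derivative jump condition holds.\<close>
definition solves_dNLS :: "real \<Rightarrow> real \<Rightarrow> (real \<Rightarrow> real \<Rightarrow> complex) \<Rightarrow> bool" where
  "solves_dNLS p T \<psi> \<longleftrightarrow>
    (\<forall>t \<in> {0..<T}.
       (\<forall>x. x \<noteq> 0 \<longrightarrow>
          (\<lambda>y. \<psi> y t) differentiable (at x) \<and>
          (\<lambda>y. dx \<psi> t y) differentiable (at x) \<and>
          (\<lambda>s. \<psi> x s) differentiable (at t within {0..<T}) \<and>
          \<i> * dt T \<psi> x t + dxx \<psi> t x = 0) \<and>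
       ((\<lambda>y. \<psi> y t) \<longlongrightarrow> \<psi> 0 t) (at 0) \<and>
       (\<exists>l r. ((\<lambda>y. dx \<psi> t y) \<longlongrightarrow> r) (at_right 0) \<and>
              ((\<lambda>y. dx \<psi> t y) \<longlongrightarrow> l) (at_left 0) \<and>
              r - l = - (complex_of_real (cmod (\<psi> 0 t) powr (p - 1)) * \<psi> 0 t)))"

definition solves_stationary :: "real \<Rightarrow> real \<Rightarrow> real \<Rightarrow> (real \<Rightarrow> complex) \<Rightarrow> bool" where
  "solves_stationary p \<kappa> h \<eta> \<longleftrightarrow>
    (\<forall>z. z \<noteq> 0 \<longrightarrow>
       \<eta> differentiable (at z) \<and>
       (\<lambda>y. vector_derivative \<eta> (at y)) differentiable (at z) \<and>
       (complex_of_real \<kappa> + \<i> * complex_of_real (h * sigma_c p)) * \<eta> z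
         - \<i> * complex_of_real h * (\<eta> z / 2 + complex_of_real z * vector_derivative \<eta> (at z))
         - vector_derivative (\<lambda>y. vector_derivative \<eta> (at y)) (at z) = 0) \<and>
    (\<eta> \<longlongrightarrow> \<eta> 0) (at 0) \<and>
    (\<exists>l r. ((\<lambda>y. vector_derivative \<eta> (at y)) \<longlongrightarrow> r) (at_right 0) \<and>
           ((\<lambda>y. vector_derivative \<eta> (at y)) \<longlongrightarrow> l) (at_left 0) \<and>
           r - l = - (complex_of_real (cmod (\<eta> 0) powr (p - 1)) * \<eta> 0))"

end

theory Submission
  imports Defs
begin

text \<open>Write \<open>\<psi>(x,t) = A(t) \<eta>(\<lambda>(t) x)\<close> with \<open>A = \<lambda>^q exp(i \<tau>)\<close> and \<open>q = 1/(p-1)\<close>.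
  Off the origin, \<open>i \<psi>_t + \<psi>_xx\<close> is \<open>A \<lambda>^2\<close> times the profile residual
  \<open>\<eta>'' + i a (q \<eta> + z \<eta>') - b \<eta>\<close> at \<open>z = \<lambda> x\<close>, where \<open>a = \<lambda>'/\<lambda>^3\<close> and \<open>b = \<tau>'/\<lambda>^2\<close>;
  and because \<open>|A|^(p-1) = \<lambda>\<close>, the delta interface condition for \<open>\<psi>(-,t)\<close> is equivalent
  to the one for \<open>\<eta>\<close>. A nonzero profile determines the coefficients \<open>(a, b)\<close> of a
  vanishing residual (two different ones would make \<open>\<eta>\<close> solve an Euler equation
  \<open>z \<eta>' = c \<eta>\<close>, which is incompatible with \<open>q > 0\<close>), so \<open>a = h\<close> and \<open>b = \<kappa>\<close> are constant in
  time. Then \<open>\<lambda>' = h \<lambda>^3\<close> makes \<open>\<lambda>^-2 + 2 h t\<close> constant, the blow-up at \<open>T\<close> fixes the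
  constant, and \<open>\<tau>' = \<kappa> \<lambda>^2 = \<kappa> / (2 h (T - t))\<close> integrates to the logarithmic phase.\<close>

lemma filtermap_times_pos_at_left:
  fixes c a :: real
  assumes "c > 0"
  shows "filtermap (times c) (at_left a) = at_left (c * a)"
proof -
  have "filtermap (times c) (at_left a) = filtermap uminus (filtermap (times c) (at_right (- a)))"
    unfolding at_left_minus[of a] filtermap_filtermap by (simp add: o_def)
  also have "\<dots> = at_left (c * a)"
    unfolding filtermap_times_pos_at_right[OF assms] at_left_minus[of "c * a"] by simp
  finally show ?thesis .
qed

lemma filtermap_times_pos_at:
  fixes c a :: real
  assumes "c > 0"
  shows "filtermap (times c) (at a) = at (c * a)"
  unfolding at_eq_sup_left_right filtermap_sup
  using filtermap_times_pos_at_left[OF assms] filtermap_times_pos_at_right[OF assms] by simp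

lemma tendsto_rescale_iff:
  fixes c :: real
  assumes "c > 0"
  shows "((\<lambda>y. f (c * y)) \<longlongrightarrow> l) (at 0) \<longleftrightarrow> (f \<longlongrightarrow> l) (at 0)"
    and "((\<lambda>y. f (c * y)) \<longlongrightarrow> l) (at_left 0) \<longleftrightarrow> (f \<longlongrightarrow> l) (at_left 0)"
    and "((\<lambda>y. f (c * y)) \<longlongrightarrow> l) (at_right 0) \<longleftrightarrow> (f \<longlongrightarrow> l) (at_right 0)"
  using tendsto_compose_filtermap[of f "times c" l] filtermap_times_pos_at[OF assms, of 0]
    filtermap_times_pos_at_left[OF assms, of 0] filtermap_times_pos_at_right[OF assms, of 0]
  by (simp_all add: o_def)

lemma has_vector_derivative_rescale:
  fixes g :: "real \<Rightarrow> complex"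
  assumes "(g has_vector_derivative g') (at (L * x))"
  shows "((\<lambda>y. c * g (L * y)) has_vector_derivative c * (of_real L * g')) (at x)"
proof -
  have "((\<lambda>y. L * y) has_vector_derivative L) (at x)"
    by (auto intro!: derivative_eq_intros)
  from vector_diff_chain_at[OF this] assms
  have "((\<lambda>y. g (L * y)) has_vector_derivative L *\<^sub>R g') (at x)"
    by (simp add: o_def)
  then show ?thesis
    using has_vector_derivative_mult_right[of "\<lambda>y. g (L * y)" "L *\<^sub>R g'" "at x" c]
    by (simp add: scaleR_conv_of_real)
qed

lemma differentiable_rescale_iff:
  fixes g :: "real \<Rightarrow> complex"
  assumes "c \<noteq> 0" "L \<noteq> 0"
  shows "(\<lambda>y. c * g (L * y)) differentiable (at x) \<longleftrightarrow> g differentiable (at (L * x))"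
proof
  assume "g differentiable (at (L * x))"
  then show "(\<lambda>y. c * g (L * y)) differentiable (at x)"
    using has_vector_derivative_rescale vector_derivative_works differentiableI_vector by metis
next
  assume "(\<lambda>y. c * g (L * y)) differentiable (at x)"
  then obtain D where "((\<lambda>y. c * g (L * y)) has_vector_derivative D) (at x)"
    by (auto simp: vector_derivative_works)
  then have "((\<lambda>y. c * g (L * y)) has_vector_derivative D) (at (inverse L * (L * x)))"
    using assms by (simp add: mult.assoc[symmetric])
  from has_vector_derivative_rescale[OF this, of "inverse c"]
  show "g differentiable (at (L * x))"
    using assms by (simp add: mult.assoc[symmetric] differentiableI_vector)
qed

lemma vector_derivative_rescale:
  fixes g :: "real \<Rightarrow> complex"
  assumes "g differentiable (at (L * x))"
  shows "vector_derivative (\<lambda>y. c * g (L * y)) (at x) = c * (of_real L * vector_derivative g (at (L * x)))"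
  using assms has_vector_derivative_rescale vector_derivative_at vector_derivative_works by metis

lemma vector_derivative_cong_nhds:
  fixes f g :: "real \<Rightarrow> complex"
  assumes "\<forall>\<^sub>F y in nhds x. f y = g y"
  shows "f differentiable (at x) \<longleftrightarrow> g differentiable (at x)"
    and "vector_derivative f (at x) = vector_derivative g (at x)"
proof -
  have ev: "\<forall>\<^sub>F y in nhds x. y \<in> UNIV \<longrightarrow> f y = g y"
    using assms by simp
  have "(f has_vector_derivative D) (at x) \<longleftrightarrow> (g has_vector_derivative D) (at x)" for D
    using has_vector_derivative_cong_ev[OF ev eventually_nhds_x_imp_x[OF assms]] by simp
  then show "f differentiable (at x) \<longleftrightarrow> g differentiable (at x)"
    by (metis differentiableI_vector vector_derivative_works)
  show "vector_derivative f (at x) = vector_derivative g (at x)"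
    using vector_derivative_cong_eq[OF ev refl refl] by simp
qed

definition profile_regular :: "(real \<Rightarrow> complex) \<Rightarrow> bool" where
  "profile_regular f \<longleftrightarrow> (\<forall>z. z \<noteq> 0 \<longrightarrow> f differentiable (at z) \<and>
      (\<lambda>y. vector_derivative f (at y)) differentiable (at z))"

definition delta_condition :: "real \<Rightarrow> (real \<Rightarrow> complex) \<Rightarrow> bool" where
  "delta_condition p f \<longleftrightarrow> (f \<longlongrightarrow> f 0) (at 0) \<and>
     (\<exists>l r. ((\<lambda>y. vector_derivative f (at y)) \<longlongrightarrow> r) (at_right 0) \<and>
            ((\<lambda>y. vector_derivative f (at y)) \<longlongrightarrow> l) (at_left 0) \<and>
            r - l = - (complex_of_real (cmod (f 0) powr (p - 1)) * f 0))"

lemma vector_derivative_rescale_eventually: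
  fixes f :: "real \<Rightarrow> complex"
  assumes "\<And>z. z \<noteq> 0 \<Longrightarrow> f differentiable (at z)" "L \<noteq> 0" "\<forall>\<^sub>F y in F. y \<noteq> 0"
  shows "\<forall>\<^sub>F y in F. vector_derivative (\<lambda>y. c * f (L * y)) (at y)
                     = (c * of_real L) * vector_derivative f (at (L * y))"
  using assms(3) by eventually_elim (simp add: vector_derivative_rescale assms(1,2) mult.assoc)

lemma all_nonzero_rescale_iff:
  fixes L :: real
  assumes "L \<noteq> 0"
  shows "(\<forall>x. x \<noteq> 0 \<longrightarrow> P (L * x)) \<longleftrightarrow> (\<forall>z. z \<noteq> 0 \<longrightarrow> P z)"
proof (intro iffI allI impI)
  fix z :: real assume all: "\<forall>x. x \<noteq> 0 \<longrightarrow> P (L * x)" and z: "z \<noteq> 0"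
  have "z / L \<noteq> 0" using z assms by simp
  with all have "P (L * (z / L))" by blast
  then show "P z" using assms by simp
qed (use assms in simp)

lemma profile_regular_rescale_iff:
  fixes f :: "real \<Rightarrow> complex"
  assumes c: "c \<noteq> 0" and L: "L \<noteq> 0"
  shows "profile_regular (\<lambda>y. c * f (L * y)) \<longleftrightarrow> profile_regular f"
proof -
  let ?g = "\<lambda>y. c * f (L * y)"
  let ?f' = "\<lambda>y. vector_derivative f (at y)"
  have diff_iff: "(\<forall>x. x \<noteq> 0 \<longrightarrow> ?g differentiable (at x)) \<longleftrightarrow> (\<forall>z. z \<noteq> 0 \<longrightarrow> f differentiable (at z))"
    using all_nonzero_rescale_iff[OF L, of "\<lambda>z. f differentiable (at z)"] differentiable_rescale_iff[OF c L] by simp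
  have diff'_iff: "(\<lambda>y. vector_derivative ?g (at y)) differentiable (at x) \<longleftrightarrow> ?f' differentiable (at (L * x))"
    if f: "\<And>z. z \<noteq> 0 \<Longrightarrow> f differentiable (at z)" and x: "x \<noteq> 0" for x
  proof -
    have "\<forall>\<^sub>F y in nhds x. vector_derivative ?g (at y) = (c * of_real L) * ?f' (L * y)"
      by (rule vector_derivative_rescale_eventually[OF f L t1_space_nhds[OF x]])
    then have "(\<lambda>y. vector_derivative ?g (at y)) differentiable (at x)
        \<longleftrightarrow> (\<lambda>y. (c * of_real L) * ?f' (L * y)) differentiable (at x)"
      by (rule vector_derivative_cong_nhds(1))
    also have "\<dots> \<longleftrightarrow> ?f' differentiable (at (L * x))"
      using c L by (intro differentiable_rescale_iff) simp_all
    finally show ?thesis .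
  qed
  show ?thesis
  proof
    assume g: "profile_regular ?g"
    then have f: "\<And>z. z \<noteq> 0 \<Longrightarrow> f differentiable (at z)"
      using diff_iff unfolding profile_regular_def by blast
    have "\<forall>z. z \<noteq> 0 \<longrightarrow> ?f' differentiable (at z)"
      using g diff'_iff[OF f] all_nonzero_rescale_iff[OF L, of "\<lambda>z. ?f' differentiable (at z)"]
      unfolding profile_regular_def by blast
    then show "profile_regular f" using f unfolding profile_regular_def by blast
  next
    assume f: "profile_regular f"
    then have f1: "\<And>z. z \<noteq> 0 \<Longrightarrow> f differentiable (at z)" unfolding profile_regular_def by blast
    have "\<forall>x. x \<noteq> 0 \<longrightarrow> (\<lambda>y. vector_derivative ?g (at y)) differentiable (at x)"
      using f diff'_iff[OF f1] all_nonzero_rescale_iff[OF L, of "\<lambda>z. ?f' differentiable (at z)"]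
      unfolding profile_regular_def by blast
    then show "profile_regular ?g" using diff_iff f1 unfolding profile_regular_def by blast
  qed
qed

lemma second_derivative_rescale:
  fixes f :: "real \<Rightarrow> complex"
  assumes "profile_regular f" "L \<noteq> 0" "x \<noteq> 0"
  shows "vector_derivative (\<lambda>y. vector_derivative (\<lambda>y. c * f (L * y)) (at y)) (at x)
       = c * (of_real L * (of_real L * vector_derivative (\<lambda>z. vector_derivative f (at z)) (at (L * x))))"
proof -
  have f: "f differentiable (at z)" "(\<lambda>y. vector_derivative f (at y)) differentiable (at z)" if "z \<noteq> 0" for z
    using assms(1) that unfolding profile_regular_def by auto
  have "\<forall>\<^sub>F y in nhds x. vector_derivative (\<lambda>y. c * f (L * y)) (at y)
                     = (c * of_real L) * vector_derivative f (at (L * y))"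
    by (rule vector_derivative_rescale_eventually[OF f(1) assms(2) t1_space_nhds[OF assms(3)]])
  then have "vector_derivative (\<lambda>y. vector_derivative (\<lambda>y. c * f (L * y)) (at y)) (at x)
      = vector_derivative (\<lambda>y. (c * of_real L) * vector_derivative f (at (L * y))) (at x)"
    by (rule vector_derivative_cong_nhds(2))
  also have "\<dots> = (c * of_real L) * (of_real L * vector_derivative (\<lambda>z. vector_derivative f (at z)) (at (L * x)))"
    using assms(2,3) by (intro vector_derivative_rescale f(2)) simp
  finally show ?thesis by (simp add: mult.assoc)
qed

lemma ex_pair_mult_iff:
  fixes k :: "'a::field"
  assumes "k \<noteq> 0"
  shows "(\<exists>l r. P l r) \<longleftrightarrow> (\<exists>l r. P (k * l) (k * r))"
proof
  assume "\<exists>l r. P l r"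
  then obtain l r where "P l r" by blast
  then have "P (k * (l / k)) (k * (r / k))" using assms by simp
  then show "\<exists>l r. P (k * l) (k * r)" by blast
qed blast

lemma delta_condition_rescale_iff:
  fixes f :: "real \<Rightarrow> complex"
  assumes c: "c \<noteq> 0" and L: "L > 0" and cL: "cmod c powr (p - 1) = L"
    and f: "\<And>z. z \<noteq> 0 \<Longrightarrow> f differentiable (at z)"
  shows "delta_condition p (\<lambda>y. c * f (L * y)) \<longleftrightarrow> delta_condition p f"
proof -
  let ?g' = "\<lambda>y. vector_derivative (\<lambda>y. c * f (L * y)) (at y)"
  let ?f' = "\<lambda>y. vector_derivative f (at y)"
  let ?M = "complex_of_real (cmod (f 0) powr (p - 1)) * f 0"
  define k where "k = c * of_real L"
  have k: "k \<noteq> 0" using c L by (simp add: k_def)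
  have cont: "((\<lambda>y. c * f (L * y)) \<longlongrightarrow> c * f 0) (at 0) \<longleftrightarrow> (f \<longlongrightarrow> f 0) (at 0)"
    using tendsto_rescale_iff(1)[OF L, of f] c by simp
  have lim: "(?g' \<longlongrightarrow> k * r) F \<longleftrightarrow> (?f' \<longlongrightarrow> r) F"
    if F: "F = at_left 0 \<or> F = at_right 0" for F r
  proof -
    have "\<forall>\<^sub>F y in F. y \<noteq> 0" using F by (auto simp: eventually_at_filter)
    from vector_derivative_rescale_eventually[OF f _ this, of L c]
    have "(?g' \<longlongrightarrow> k * r) F \<longleftrightarrow> ((\<lambda>y. k * ?f' (L * y)) \<longlongrightarrow> k * r) F"
      using L by (intro tendsto_cong) (simp add: k_def)
    then show ?thesis using F k tendsto_rescale_iff(2,3)[OF L, of ?f'] by auto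
  qed
  have norm: "complex_of_real (cmod (c * f 0) powr (p - 1)) * (c * f 0) = k * ?M"
    using L by (simp add: norm_mult powr_mult cL k_def)
  have jump: "k * r - k * l = - (complex_of_real (cmod (c * f 0) powr (p - 1)) * (c * f 0))
      \<longleftrightarrow> r - l = - ?M" for l r
  proof -
    have "k * r - k * l = - (k * ?M) \<longleftrightarrow> k * (r - l) = k * (- ?M)"
      by (simp add: algebra_simps)
    also have "\<dots> \<longleftrightarrow> r - l = - ?M" using k by (metis mult_cancel_left)
    finally show ?thesis unfolding norm .
  qed
  have "(\<exists>l r. (?g' \<longlongrightarrow> r) (at_right 0) \<and> (?g' \<longlongrightarrow> l) (at_left 0) \<and>
          r - l = - (complex_of_real (cmod (c * f 0) powr (p - 1)) * (c * f 0)))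
    \<longleftrightarrow> (\<exists>l r. (?g' \<longlongrightarrow> k * r) (at_right 0) \<and> (?g' \<longlongrightarrow> k * l) (at_left 0) \<and>
          k * r - k * l = - (complex_of_real (cmod (c * f 0) powr (p - 1)) * (c * f 0)))"
    by (rule ex_pair_mult_iff[OF k])
  also have "\<dots> \<longleftrightarrow> (\<exists>l r. (?f' \<longlongrightarrow> r) (at_right 0) \<and> (?f' \<longlongrightarrow> l) (at_left 0) \<and> r - l = - ?M)"
    using jump lim[of "at_left 0"] lim[of "at_right 0"] by simp
  finally show ?thesis
    unfolding delta_condition_def using cont by simp
qed

definition profile_residual :: "(real \<Rightarrow> complex) \<Rightarrow> real \<Rightarrow> real \<Rightarrow> real \<Rightarrow> real \<Rightarrow> complex" where
  "profile_residual f a b q z = vector_derivative (\<lambda>y. vector_derivative f (at y)) (at z)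
     + \<i> * of_real a * (of_real q * f z + of_real z * vector_derivative f (at z)) - of_real b * f z"

definition self_similar :: "real \<Rightarrow> (real \<Rightarrow> real) \<Rightarrow> (real \<Rightarrow> real) \<Rightarrow> (real \<Rightarrow> complex) \<Rightarrow> real \<Rightarrow> real \<Rightarrow> complex" where
  "self_similar q lam tau f = (\<lambda>x t. of_real (lam t powr q) * exp (\<i> * of_real (tau t)) * f (lam t * x))"

lemma solves_stationary_iff:
  assumes "p \<noteq> 1"
  shows "solves_stationary p \<kappa> h f \<longleftrightarrow> profile_regular f \<and> delta_condition p f \<and>
           (\<forall>z. z \<noteq> 0 \<longrightarrow> profile_residual f h \<kappa> (1 / (p - 1)) z = 0)"
proof -
  have "(of_real \<kappa> + \<i> * of_real (h * sigma_c p)) * f z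
         - \<i> * of_real h * (f z / 2 + of_real z * vector_derivative f (at z))
         - vector_derivative (\<lambda>y. vector_derivative f (at y)) (at z)
       = - profile_residual f h \<kappa> (1 / (p - 1)) z" for z
    unfolding profile_residual_def sigma_c_def using assms
    by (simp add: algebra_simps of_real_diff of_real_divide divide_simps)
  then show ?thesis
    unfolding solves_stationary_def profile_regular_def delta_condition_def by auto
qed

lemma solves_dNLS_iff:
  "solves_dNLS p T \<psi> \<longleftrightarrow> (\<forall>t \<in> {0..<T}.
     profile_regular (\<lambda>y. \<psi> y t) \<and> delta_condition p (\<lambda>y. \<psi> y t) \<and>
     (\<forall>x. x \<noteq> 0 \<longrightarrow> (\<lambda>s. \<psi> x s) differentiable (at t within {0..<T}) \<and>
                    \<i> * dt T \<psi> x t + dxx \<psi> t x = 0))"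
  unfolding solves_dNLS_def profile_regular_def delta_condition_def dx_def by blast

lemma has_vector_derivative_self_similar_time:
  fixes lam tau :: "real \<Rightarrow> real" and f :: "real \<Rightarrow> complex"
  assumes lpos: "lam t > 0"
    and dl: "(lam has_real_derivative l') (at t within S)"
    and dtau: "(tau has_real_derivative \<tau>') (at t within S)"
    and df: "f differentiable (at (lam t * x))"
  shows "((\<lambda>s. self_similar q lam tau f x s) has_vector_derivative
      of_real (lam t powr q) * exp (\<i> * of_real (tau t)) *
        ((of_real (q * l' / lam t) + \<i> * of_real \<tau>') * f (lam t * x)
          + of_real (l' * x) * vector_derivative f (at (lam t * x)))) (at t within S)"
proof -
  have "((\<lambda>s. lam s powr q) has_real_derivative (q * lam t powr (q - 1) * l')) (at t within S)"
    using DERIV_chain2[OF has_real_derivative_powr[OF lpos] dl] by simp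
  then have amplitude: "((\<lambda>s. of_real (lam s powr q)) has_vector_derivative
      of_real (q * lam t powr (q - 1) * l')) (at t within S)"
    by (rule has_vector_derivative_of_real)
  have "((\<lambda>s. \<i> * of_real (tau s)) has_vector_derivative \<i> * of_real \<tau>') (at t within S)"
    using has_vector_derivative_mult_right[OF has_vector_derivative_of_real[OF dtau], of \<i>] by simp
  then have phase: "((\<lambda>s. exp (\<i> * of_real (tau s))) has_vector_derivative
      (\<i> * of_real \<tau>') * exp (\<i> * of_real (tau t))) (at t within S)"
    using field_vector_diff_chain_within[of _ _ t S exp "exp (\<i> * of_real (tau t))"]
    by (simp add: o_def DERIV_exp has_field_derivative_at_within)
  have "((\<lambda>s. lam s * x) has_vector_derivative l' * x) (at t within S)"
    using dl by (auto intro!: derivative_eq_intros simp: has_real_derivative_iff_has_vector_derivative[symmetric])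
  then have profile: "((\<lambda>s. f (lam s * x)) has_vector_derivative
      (l' * x) *\<^sub>R vector_derivative f (at (lam t * x))) (at t within S)"
    using vector_diff_chain_within[of _ _ t S f] df
    by (simp add: o_def vector_derivative_works has_vector_derivative_at_within)
  show ?thesis
    unfolding self_similar_def
    by (rule has_vector_derivative_eq_rhs[OF
          has_vector_derivative_mult[OF has_vector_derivative_mult[OF amplitude phase] profile]])
       (use lpos in \<open>simp add: scaleR_conv_of_real powr_diff algebra_simps divide_simps\<close>)
qed

lemma self_similar_equation:
  fixes q :: real and lam tau :: "real \<Rightarrow> real" and f :: "real \<Rightarrow> complex"
  defines "\<psi> \<equiv> self_similar q lam tau f"
  assumes t: "0 \<le> t" "t < T" and lpos: "lam t > 0"
    and dl: "(lam has_real_derivative l') (at t within {0..<T})"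
    and dtau: "(tau has_real_derivative \<tau>') (at t within {0..<T})"
    and f: "profile_regular f" and x: "x \<noteq> 0"
  shows "(\<lambda>s. \<psi> x s) differentiable (at t within {0..<T})"
    and "\<i> * dt T \<psi> x t + dxx \<psi> t x =
        of_real (lam t powr q) * exp (\<i> * of_real (tau t)) * of_real ((lam t)\<^sup>2)
        * profile_residual f (l' / lam t ^ 3) (\<tau>' / (lam t)\<^sup>2) q (lam t * x)"
proof -
  let ?c = "of_real (lam t powr q) * exp (\<i> * of_real (tau t))"
  have "lam t * x \<noteq> 0" using lpos x by simp
  then have df: "f differentiable (at (lam t * x))" using f unfolding profile_regular_def by blast
  note time = has_vector_derivative_self_similar_time[OF lpos dl dtau df, of q]
  show "(\<lambda>s. \<psi> x s) differentiable (at t within {0..<T})"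
    unfolding \<psi>_def using time by (rule differentiableI_vector)
  have "at t within {0..<T} \<noteq> bot"
    using t by (simp add: trivial_limit_within)
  then have dt: "dt T \<psi> x t = ?c * ((of_real (q * l' / lam t) + \<i> * of_real \<tau>') * f (lam t * x)
          + of_real (l' * x) * vector_derivative f (at (lam t * x)))"
    unfolding dt_def \<psi>_def using time by (rule vector_derivative_within)
  have "(\<lambda>y. \<psi> y t) = (\<lambda>y. ?c * f (lam t * y))"
    by (simp add: \<psi>_def self_similar_def)
  then have dxx: "dxx \<psi> t x = ?c * (of_real (lam t) * (of_real (lam t) *
      vector_derivative (\<lambda>z. vector_derivative f (at z)) (at (lam t * x))))"
    unfolding dxx_def dx_def using second_derivative_rescale[OF f _ x] lpos by simp
  show "\<i> * dt T \<psi> x t + dxx \<psi> t x =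
      ?c * of_real ((lam t)\<^sup>2) * profile_residual f (l' / lam t ^ 3) (\<tau>' / (lam t)\<^sup>2) q (lam t * x)"
    unfolding dt dxx profile_residual_def using lpos
    by (simp add: algebra_simps power2_eq_square power3_eq_cube divide_simps)
qed

lemma norm_amplitude_phase_powr:
  assumes "L > 0" "q * (p - 1) = 1"
  shows "cmod (of_real (L powr q) * exp (\<i> * of_real \<tau>)) powr (p - 1) = L"
  using assms by (simp add: norm_mult norm_exp powr_powr)

lemma self_similar_slice_iff:
  fixes q :: real and lam tau :: "real \<Rightarrow> real" and f :: "real \<Rightarrow> complex"
  defines "\<psi> \<equiv> self_similar q lam tau f"
  assumes t: "0 \<le> t" "t < T" and lpos: "lam t > 0"
    and dl: "(lam has_real_derivative l') (at t within {0..<T})"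
    and dtau: "(tau has_real_derivative \<tau>') (at t within {0..<T})"
    and q: "q * (p - 1) = 1"
  shows "profile_regular (\<lambda>y. \<psi> y t) \<and> delta_condition p (\<lambda>y. \<psi> y t) \<and>
         (\<forall>x. x \<noteq> 0 \<longrightarrow> (\<lambda>s. \<psi> x s) differentiable (at t within {0..<T}) \<and>
                        \<i> * dt T \<psi> x t + dxx \<psi> t x = 0)
     \<longleftrightarrow> profile_regular f \<and> delta_condition p f \<and>
         (\<forall>z. z \<noteq> 0 \<longrightarrow> profile_residual f (l' / lam t ^ 3) (\<tau>' / (lam t)\<^sup>2) q z = 0)"
proof -
  define c where "c = of_real (lam t powr q) * exp (\<i> * of_real (tau t))"
  have c: "c \<noteq> 0" using lpos by (simp add: c_def)
  have slice: "(\<lambda>y. \<psi> y t) = (\<lambda>y. c * f (lam t * y))"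
    by (simp add: \<psi>_def self_similar_def c_def)
  have regular: "profile_regular (\<lambda>y. \<psi> y t) \<longleftrightarrow> profile_regular f"
    unfolding slice using profile_regular_rescale_iff[OF c] lpos by simp
  have delta: "delta_condition p (\<lambda>y. \<psi> y t) \<longleftrightarrow> delta_condition p f" if f: "profile_regular f"
    unfolding slice using f unfolding profile_regular_def
    by (intro delta_condition_rescale_iff c lpos) (simp_all add: c_def norm_amplitude_phase_powr[OF lpos q])
  have equation: "(\<forall>x. x \<noteq> 0 \<longrightarrow> (\<lambda>s. \<psi> x s) differentiable (at t within {0..<T}) \<and>
                        \<i> * dt T \<psi> x t + dxx \<psi> t x = 0)
      \<longleftrightarrow> (\<forall>z. z \<noteq> 0 \<longrightarrow> profile_residual f (l' / lam t ^ 3) (\<tau>' / (lam t)\<^sup>2) q z = 0)"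
    if f: "profile_regular f"
  proof -
    have "c * of_real ((lam t)\<^sup>2) \<noteq> 0" using c lpos by simp
    then have "(\<forall>x. x \<noteq> 0 \<longrightarrow> (\<lambda>s. \<psi> x s) differentiable (at t within {0..<T}) \<and>
                        \<i> * dt T \<psi> x t + dxx \<psi> t x = 0)
      \<longleftrightarrow> (\<forall>x. x \<noteq> 0 \<longrightarrow> profile_residual f (l' / lam t ^ 3) (\<tau>' / (lam t)\<^sup>2) q (lam t * x) = 0)"
      unfolding \<psi>_def using self_similar_equation[where q = q, OF t lpos dl dtau f] by (simp add: c_def)
    also have "\<dots> \<longleftrightarrow> (\<forall>z. z \<noteq> 0 \<longrightarrow> profile_residual f (l' / lam t ^ 3) (\<tau>' / (lam t)\<^sup>2) q z = 0)"
      using lpos by (intro all_nonzero_rescale_iff) simp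
    finally show ?thesis .
  qed
  show ?thesis using regular delta equation by blast
qed

lemma solves_dNLS_self_similar_iff:
  fixes q :: real and lam tau lam' tau' :: "real \<Rightarrow> real" and f :: "real \<Rightarrow> complex"
  assumes T: "T > 0" and q: "q * (p - 1) = 1"
    and lpos: "\<forall>t \<in> {0..<T}. lam t > 0"
    and dl: "\<forall>t \<in> {0..<T}. (lam has_real_derivative lam' t) (at t within {0..<T})"
    and dtau: "\<forall>t \<in> {0..<T}. (tau has_real_derivative tau' t) (at t within {0..<T})"
  shows "solves_dNLS p T (self_similar q lam tau f) \<longleftrightarrow>
           profile_regular f \<and> delta_condition p f \<and>
           (\<forall>t \<in> {0..<T}. \<forall>z. z \<noteq> 0 \<longrightarrow>
              profile_residual f (lam' t / lam t ^ 3) (tau' t / (lam t)\<^sup>2) q z = 0)"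
proof -
  have "0 \<in> {0..<T}" using T by simp
  moreover have "\<forall>t \<in> {0..<T}. (profile_regular (\<lambda>y. self_similar q lam tau f y t) \<and>
         delta_condition p (\<lambda>y. self_similar q lam tau f y t) \<and>
         (\<forall>x. x \<noteq> 0 \<longrightarrow> (\<lambda>s. self_similar q lam tau f x s) differentiable (at t within {0..<T}) \<and>
                        \<i> * dt T (self_similar q lam tau f) x t + dxx (self_similar q lam tau f) t x = 0))
     \<longleftrightarrow> profile_regular f \<and> delta_condition p f \<and>
         (\<forall>z. z \<noteq> 0 \<longrightarrow> profile_residual f (lam' t / lam t ^ 3) (tau' t / (lam t)\<^sup>2) q z = 0)"
    using self_similar_slice_iff[OF _ _ _ _ _ q] lpos dl dtau by simp
  ultimately show ?thesis unfolding solves_dNLS_iff by blast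
qed

lemma isCont_nonzero_avoiding_finite:
  fixes f :: "real \<Rightarrow> complex"
  assumes "isCont f y0" "f y0 \<noteq> 0" "finite S"
  obtains y where "f y \<noteq> 0" "y \<notin> S"
proof -
  have "\<forall>\<^sub>F y in at y0. f y \<noteq> 0"
    using tendsto_imp_eventually_ne[OF assms(1)[unfolded isCont_def] assms(2)] .
  moreover have "\<forall>\<^sub>F y in at y0. y \<notin> S"
    using islimpt_iff_eventually islimpt_finite[OF assms(3)] by blast
  ultimately have "\<forall>\<^sub>F y in at y0. f y \<noteq> 0 \<and> y \<notin> S" by eventually_elim blast
  then show ?thesis using eventually_happens'[OF at_neq_bot] that by blast
qed

lemma euler_profile_second_derivative:
  fixes f :: "real \<Rightarrow> complex"
  assumes f: "profile_regular f"
    and euler: "\<forall>y. y \<noteq> 0 \<longrightarrow> of_real y * vector_derivative f (at y) = c * f y"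
    and z: "z \<noteq> 0"
  shows "of_real z * vector_derivative (\<lambda>y. vector_derivative f (at y)) (at z)
       = (c - 1) * vector_derivative f (at z)"
proof -
  let ?f' = "\<lambda>y. vector_derivative f (at y)"
  let ?f'' = "vector_derivative ?f' (at z)"
  have d1: "(f has_vector_derivative ?f' z) (at z)" and d2: "(?f' has_vector_derivative ?f'') (at z)"
    using f z unfolding profile_regular_def by (auto simp: vector_derivative_works)
  have "((\<lambda>y. of_real y * ?f' y - c * f y) has_vector_derivative
          of_real z * ?f'' + 1 * ?f' z - (c * ?f' z + 0 * f z)) (at z)"
    by (intro has_vector_derivative_diff has_vector_derivative_mult d1 d2 has_vector_derivative_const
          has_vector_derivative_of_real[OF DERIV_ident, simplified])
  moreover have "((\<lambda>y. of_real y * ?f' y - c * f y) has_vector_derivative 0) (at z)"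
    by (rule has_vector_derivative_transform_within_open[OF has_vector_derivative_const, where S = "{y. y \<noteq> 0}"])
       (use z euler in \<open>auto simp: open_Collect_neq\<close>)
  ultimately show ?thesis
    using vector_derivative_unique_at by (fastforce simp: algebra_simps)
qed

text \<open>Under \<open>z f' = c f\<close> the residual reduces to \<open>(M z^2 + c (c - 1)) f\<close> with
  \<open>M = i a (q + c) - b\<close>; evaluating at two points with different \<open>|z|\<close> gives \<open>M = 0\<close> and
  \<open>c \<in> {0, 1}\<close>, and then \<open>Im M = a (q + c)\<close> with \<open>q > 0\<close>.\<close>
lemma euler_profile_residual_coeff_eq_0:
  fixes f :: "real \<Rightarrow> complex"
  assumes q: "q > 0" and f: "profile_regular f"
    and euler: "\<forall>y. y \<noteq> 0 \<longrightarrow> of_real y * vector_derivative f (at y) = c * f y"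
    and res: "\<forall>z. z \<noteq> 0 \<longrightarrow> profile_residual f a b q z = 0"
    and y0: "y0 \<noteq> 0" "f y0 \<noteq> 0"
  shows "a = 0"
proof -
  define M where "M = \<i> * of_real a * (of_real q + c) - of_real b"
  have key: "M * of_real (y\<^sup>2) + c * (c - 1) = 0" if y: "y \<noteq> 0" "f y \<noteq> 0" for y
  proof -
    have "vector_derivative (\<lambda>y. vector_derivative f (at y)) (at y) = - M * f y"
      using res euler y unfolding profile_residual_def M_def by (auto simp: algebra_simps)
    moreover have "of_real y * (of_real y * vector_derivative (\<lambda>y. vector_derivative f (at y)) (at y))
        = (c - 1) * (of_real y * vector_derivative f (at y))"
      unfolding euler_profile_second_derivative[OF f euler y(1)] by (simp add: ac_simps)
    then have "of_real y * (of_real y * vector_derivative (\<lambda>y. vector_derivative f (at y)) (at y))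
        = (c - 1) * (c * f y)"
      using euler y(1) by simp
    ultimately have "(M * of_real (y\<^sup>2) + c * (c - 1)) * f y = 0"
      by (simp add: algebra_simps power2_eq_square)
    then show ?thesis using y(2) by simp
  qed
  have "isCont f y0"
    using f y0(1) unfolding profile_regular_def by (simp add: differentiable_imp_continuous_within)
  then obtain y1 where y1: "f y1 \<noteq> 0" "y1 \<notin> {0, y0, - y0}"
    by (rule isCont_nonzero_avoiding_finite[where S = "{0, y0, - y0}"]) (use y0(2) in simp_all)
  have "of_real (y1\<^sup>2) \<noteq> (of_real (y0\<^sup>2) :: complex)"
    using y1(2) by (auto simp: power2_eq_iff)
  moreover have "M * of_real (y1\<^sup>2) = M * of_real (y0\<^sup>2)"
    using key[of y1] key[OF y0] y1 by (metis add_right_cancel insertCI)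
  ultimately have M: "M = 0" by (metis mult_cancel_left)
  then have "c = 0 \<or> c = 1" using key[OF y0] by simp
  then obtain r where r: "c = of_real r" "r \<ge> 0" by auto
  have "a * (q + r) = Im M" using r by (simp add: M_def)
  then show "a = 0" using M q r by simp
qed

lemma profile_residual_coeffs_unique:
  fixes f :: "real \<Rightarrow> complex"
  assumes q: "q > 0" and f: "profile_regular f"
    and res1: "\<forall>z. z \<noteq> 0 \<longrightarrow> profile_residual f a1 b1 q z = 0"
    and res2: "\<forall>z. z \<noteq> 0 \<longrightarrow> profile_residual f a2 b2 q z = 0"
    and y0: "y0 \<noteq> 0" "f y0 \<noteq> 0"
  shows "a1 = a2 \<and> b1 = b2"
proof -
  have diff: "\<i> * of_real (a1 - a2) * (of_real q * f y + of_real y * vector_derivative f (at y))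
      = of_real (b1 - b2) * f y" if "y \<noteq> 0" for y
  proof -
    have "\<i> * of_real (a1 - a2) * (of_real q * f y + of_real y * vector_derivative f (at y))
        - of_real (b1 - b2) * f y = profile_residual f a1 b1 q y - profile_residual f a2 b2 q y"
      unfolding profile_residual_def by (simp add: algebra_simps)
    also have "\<dots> = 0" using res1 res2 that by simp
    finally show ?thesis by simp
  qed
  have "a1 = a2"
  proof (rule ccontr)
    assume ne: "a1 \<noteq> a2"
    define c where "c = of_real (b1 - b2) / (\<i> * of_real (a1 - a2)) - of_real q"
    have "\<forall>y. y \<noteq> 0 \<longrightarrow> of_real y * vector_derivative f (at y) = c * f y"
      using diff ne by (auto simp: c_def field_simps)
    then show False
      using euler_profile_residual_coeff_eq_0[OF q f _ res1 y0]
        euler_profile_residual_coeff_eq_0[OF q f _ res2 y0] ne by blast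
  qed
  moreover from this have "b1 = b2" using diff[OF y0(1)] y0(2) by simp
  ultimately show ?thesis ..
qed

lemma profile_nonzero_off_origin:
  fixes f :: "real \<Rightarrow> complex"
  assumes f: "profile_regular f" "delta_condition p f" and nz: "f \<noteq> (\<lambda>_. 0)"
  obtains y0 where "y0 \<noteq> 0" "f y0 \<noteq> 0"
proof -
  obtain y where y: "f y \<noteq> 0" using nz by auto
  have "isCont f y"
  proof (cases "y = 0")
    case True
    then show ?thesis using f(2) by (simp add: delta_condition_def isCont_def)
  next
    case False
    then show ?thesis using f(1) by (simp add: profile_regular_def differentiable_imp_continuous_within)
  qed
  then obtain y0 where "f y0 \<noteq> 0" "y0 \<notin> {0}"
    by (rule isCont_nonzero_avoiding_finite[where S = "{0}"]) (use y in simp_all)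
  then show ?thesis using that by blast
qed

lemma cubic_ode_inverse_square:
  fixes lam :: "real \<Rightarrow> real"
  assumes pos: "\<forall>t \<in> {0..<T}. lam t > 0"
    and der: "\<forall>t \<in> {0..<T}. (lam has_real_derivative h * lam t ^ 3) (at t within {0..<T})"
  obtains C where "\<forall>t \<in> {0..<T}. 1 / (lam t)\<^sup>2 = C - 2 * h * t"
proof -
  define g where "g t = 1 / (lam t)\<^sup>2 + 2 * h * t" for t
  have "(g has_real_derivative 0) (at t within {0..<T})" if t: "t \<in> {0..<T}" for t
  proof -
    have lt: "lam t > 0" and dt: "(lam has_real_derivative h * lam t ^ 3) (at t within {0..<T})"
      using pos der t by blast+
    have "(g has_real_derivative - (2 * lam t * (h * lam t ^ 3)) / ((lam t)\<^sup>2)\<^sup>2 + 2 * h) (at t within {0..<T})"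
      unfolding g_def using dt lt by (auto intro!: derivative_eq_intros simp: power2_eq_square)
    moreover have "- (2 * lam t * (h * lam t ^ 3)) / ((lam t)\<^sup>2)\<^sup>2 + 2 * h = 0"
      using lt by (simp add: field_simps power2_eq_square power3_eq_cube power4_eq_xxxx)
    ultimately show ?thesis by simp
  qed
  then obtain C where "\<forall>t \<in> {0..<T}. g t = C"
    using has_field_derivative_zero_constant[of "{0..<T}" g] by (auto simp: convex_real_interval)
  then show ?thesis using that by (auto simp: g_def algebra_simps)
qed

lemma cubic_blowup_ode_solution:
  fixes lam :: "real \<Rightarrow> real"
  assumes T: "T > 0" and pos: "\<forall>t \<in> {0..<T}. lam t > 0"
    and der: "\<forall>t \<in> {0..<T}. (lam has_real_derivative h * lam t ^ 3) (at t within {0..<T})"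
    and lim: "filterlim lam at_top (at_left T)"
  shows "h > 0 \<and> (\<forall>t \<in> {0..<T}. lam t = 1 / sqrt (2 * h * (T - t)))"
proof -
  obtain C where C: "\<forall>t \<in> {0..<T}. 1 / (lam t)\<^sup>2 = C - 2 * h * t"
    using cubic_ode_inverse_square[OF pos der] by blast
  \<comment> \<open>Letting \<open>t \<nearrow> T\<close>, the blow-up of \<open>lam\<close> forces \<open>C = 2 h T\<close>.\<close>
  have "((\<lambda>t. inverse (lam t)) \<longlongrightarrow> 0) (at_left T)"
    by (rule tendsto_inverse_0_at_top[OF lim])
  from tendsto_power[OF this, of 2] have "((\<lambda>t. 1 / (lam t)\<^sup>2) \<longlongrightarrow> 0) (at_left T)"
    by (simp add: power_inverse divide_inverse)
  moreover have "\<forall>\<^sub>F t in at_left T. 1 / (lam t)\<^sup>2 = C - 2 * h * t"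
    using eventually_at_left_real[OF T] by eventually_elim (use C in auto)
  ultimately have "((\<lambda>t. C - 2 * h * t) \<longlongrightarrow> 0) (at_left T)"
    using tendsto_cong by fastforce
  moreover have "((\<lambda>t. C - 2 * h * t) \<longlongrightarrow> C - 2 * h * T) (at_left T)"
    by (intro tendsto_intros)
  ultimately have "C - 2 * h * T = 0"
    by (rule tendsto_unique[OF trivial_limit_at_left_real, rotated])
  then have inv: "1 / (lam t)\<^sup>2 = 2 * h * (T - t)" if "t \<in> {0..<T}" for t
    using C that by (auto simp: right_diff_distrib)
  have "lam 0 > 0" using pos T by simp
  then have "1 / (lam 0)\<^sup>2 > 0" by simp
  then have "2 * h * T > 0" using inv[of 0] T by simp
  then have h: "h > 0" using T by (simp add: zero_less_mult_iff)
  have "lam t = 1 / sqrt (2 * h * (T - t))" if t: "t \<in> {0..<T}" for t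
  proof -
    have "sqrt (2 * h * (T - t)) = sqrt ((1 / lam t)\<^sup>2)" using inv[OF t] by (simp add: power_divide)
    also have "\<dots> = 1 / lam t" using pos[rule_format, OF t] by simp
    finally show ?thesis by simp
  qed
  then show ?thesis using h by blast
qed

lemma has_real_derivative_blowup_rate:
  fixes h T t :: real
  assumes "h > 0" "t < T"
  shows "((\<lambda>s. 1 / sqrt (2 * h * (T - s))) has_real_derivative h * (1 / sqrt (2 * h * (T - t))) ^ 3) (at t)"
proof -
  define r where "r = sqrt (2 * h * (T - t))"
  have r: "r > 0" "r\<^sup>2 = 2 * h * (T - t)" using assms by (auto simp: r_def)
  have "h * (1 / r) ^ 3 = h / (r * r\<^sup>2)"
    by (simp add: power3_eq_cube power2_eq_square field_simps)
  also have "\<dots> = inverse r / (2 * T - 2 * t)"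
    unfolding r(2) using r(1) assms by (simp add: field_simps)
  finally have "inverse r / (2 * T - 2 * t) = h * (1 / r) ^ 3" ..
  then show ?thesis
    using r(1) unfolding r_def by (auto intro!: derivative_eq_intros)
qed

lemma filterlim_blowup_rate:
  fixes h T :: real
  assumes "h > 0"
  shows "filterlim (\<lambda>s. 1 / sqrt (2 * h * (T - s))) at_top (at_left T)"
proof -
  have "filterlim (\<lambda>s. sqrt (2 * h * (T - s))) (at_right 0) (at_left T)"
  proof (subst filterlim_at, intro conjI)
    show "\<forall>\<^sub>F s in at_left T. sqrt (2 * h * (T - s)) \<in> {0<..} \<and> sqrt (2 * h * (T - s)) \<noteq> 0"
      using assms by (auto simp: eventually_at_left_field intro!: exI[of _ "T - 1"])
    have "((\<lambda>s. sqrt (2 * h * (T - s))) \<longlongrightarrow> sqrt (2 * h * (T - T))) (at_left T)"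
      by (intro tendsto_intros)
    then show "((\<lambda>s. sqrt (2 * h * (T - s))) \<longlongrightarrow> 0) (at_left T)" by simp
  qed
  from filterlim_compose[OF filterlim_inverse_at_top_right this]
  show ?thesis by (simp add: divide_inverse)
qed

lemma has_real_derivative_log_phase:
  fixes T t :: real
  assumes "T > 0" "t < T"
  shows "((\<lambda>s. ln (T / (T - s))) has_real_derivative 1 / (T - t)) (at t)"
proof -
  have "((\<lambda>s. ln (T / (T - s))) has_real_derivative inverse (T / (T - t)) * (T / (T - t)\<^sup>2)) (at t)"
    using assms by (auto intro!: derivative_eq_intros simp: power2_eq_square)
  moreover have "inverse (T / (T - t)) * (T / (T - t)\<^sup>2) = ((T - t) * T) / (T * ((T - t) * (T - t)))"
    by (simp add: power2_eq_square)
  also have "\<dots> = 1 / (T - t)"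
    using assms by (simp add: divide_simps)
  ultimately show ?thesis by simp
qed

lemma log_phase_ode_solution:
  fixes tau :: "real \<Rightarrow> real"
  assumes T: "T > 0"
    and der: "\<forall>t \<in> {0..<T}. (tau has_real_derivative a / (T - t)) (at t within {0..<T})"
  shows "\<forall>t \<in> {0..<T}. tau t = a * ln (T / (T - t)) + tau 0"
proof -
  define g where "g t = tau t - a * ln (T / (T - t))" for t
  have "(g has_real_derivative 0) (at t within {0..<T})" if t: "t \<in> {0..<T}" for t
  proof -
    have "(g has_real_derivative a / (T - t) - a * (1 / (T - t))) (at t within {0..<T})"
      unfolding g_def using t der
      by (intro DERIV_diff DERIV_cmult has_field_derivative_at_within[OF has_real_derivative_log_phase[OF T]]) auto
    then show ?thesis by simp
  qed
  then obtain C where C: "\<And>t. t \<in> {0..<T} \<Longrightarrow> g t = C"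
    using has_field_derivative_zero_constant[of "{0..<T}" g] by (auto simp: convex_real_interval)
  have "g 0 = tau 0" by (simp add: g_def)
  moreover have "g t = g 0" if "t \<in> {0..<T}" for t
    using C[OF that] C[of 0] T by simp
  ultimately show ?thesis unfolding g_def by force
qed

lemma self_similar_blowup_imp_stationary:
  fixes p T :: real and lam tau lam' tau' :: "real \<Rightarrow> real" and f :: "real \<Rightarrow> complex"
  assumes p: "p > 1" and T: "T > 0"
    and lpos: "\<forall>t \<in> {0..<T}. lam t > 0"
    and dl: "\<forall>t \<in> {0..<T}. (lam has_real_derivative lam' t) (at t within {0..<T})"
    and dtau: "\<forall>t \<in> {0..<T}. (tau has_real_derivative tau' t) (at t within {0..<T})"
    and nz: "f \<noteq> (\<lambda>_. 0)"
    and sol: "solves_dNLS p T (self_similar (1 / (p - 1)) lam tau f)"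
    and lim: "filterlim lam at_top (at_left T)"
  shows "\<exists>h > 0. \<exists>\<kappa>. (\<forall>t \<in> {0..<T}. lam t = 1 / sqrt (2 * h * (T - t)) \<and>
                                  tau t = \<kappa> / (2 * h) * ln (T / (T - t)) + tau 0)
                    \<and> solves_stationary p \<kappa> h f"
proof -
  define q where "q = 1 / (p - 1)"
  have q: "q > 0" "q * (p - 1) = 1" using p by (auto simp: q_def)
  from sol have "solves_dNLS p T (self_similar q lam tau f)" by (simp add: q_def)
  then have reg: "profile_regular f" and delta: "delta_condition p f"
    and res: "\<forall>t \<in> {0..<T}. \<forall>z. z \<noteq> 0 \<longrightarrow>
                profile_residual f (lam' t / lam t ^ 3) (tau' t / (lam t)\<^sup>2) q z = 0"
    unfolding solves_dNLS_self_similar_iff[OF T q(2) lpos dl dtau] by blast+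
  obtain y0 where y0: "y0 \<noteq> 0" "f y0 \<noteq> 0"
    using profile_nonzero_off_origin[OF reg delta nz] by blast
  define h where "h = lam' 0 / lam 0 ^ 3"
  define \<kappa> where "\<kappa> = tau' 0 / (lam 0)\<^sup>2"
  have coeffs: "lam' t / lam t ^ 3 = h \<and> tau' t / (lam t)\<^sup>2 = \<kappa>" if "t \<in> {0..<T}" for t
    unfolding h_def \<kappa>_def using T that res
    by (intro profile_residual_coeffs_unique[OF q(1) reg _ _ y0]) auto
  have lam': "\<forall>t \<in> {0..<T}. lam' t = h * lam t ^ 3" and tau': "\<forall>t \<in> {0..<T}. tau' t = \<kappa> * (lam t)\<^sup>2"
    using coeffs lpos by (auto simp: divide_eq_eq)
  obtain h_pos: "h > 0" and lam_eq: "\<forall>t \<in> {0..<T}. lam t = 1 / sqrt (2 * h * (T - t))"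
    using cubic_blowup_ode_solution[OF T lpos _ lim] dl lam' by auto
  have "\<forall>t \<in> {0..<T}. tau t = \<kappa> / (2 * h) * ln (T / (T - t)) + tau 0"
  proof (rule log_phase_ode_solution[OF T], intro ballI)
    fix t assume t: "t \<in> {0..<T}"
    have "(lam t)\<^sup>2 = 1 / (2 * h * (T - t))"
      using lam_eq t h_pos by (simp add: power_divide)
    then have "tau' t = \<kappa> / (2 * h) / (T - t)"
      using tau' t by simp
    then show "(tau has_real_derivative \<kappa> / (2 * h) / (T - t)) (at t within {0..<T})"
      using dtau t by metis
  qed
  moreover have "solves_stationary p \<kappa> h f"
    unfolding solves_stationary_iff[OF p[THEN less_imp_neq, symmetric]]
    using reg delta res T by (auto simp: h_def \<kappa>_def q_def)
  ultimately show ?thesis using h_pos lam_eq by blast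
qed

lemma stationary_imp_self_similar_blowup:
  fixes p T h \<kappa> :: real and lam tau :: "real \<Rightarrow> real" and f :: "real \<Rightarrow> complex"
  assumes p: "p > 1" and T: "T > 0" and h: "h > 0"
    and form: "\<forall>t \<in> {0..<T}. lam t = 1 / sqrt (2 * h * (T - t)) \<and>
                            tau t = \<kappa> / (2 * h) * ln (T / (T - t)) + tau 0"
    and stat: "solves_stationary p \<kappa> h f"
  shows "solves_dNLS p T (self_similar (1 / (p - 1)) lam tau f) \<and> filterlim lam at_top (at_left T)"
proof -
  have q: "1 / (p - 1) * (p - 1) = 1" using p by simp
  \<comment> \<open>\<open>tau_eq\<close> is kept out of the simplifier: at \<open>t = 0\<close> it would rewrite \<open>tau 0\<close> forever.\<close>
  have lam_eq: "\<And>t. t \<in> {0..<T} \<Longrightarrow> lam t = 1 / sqrt (2 * h * (T - t))"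
    and tau_eq: "\<And>t. t \<in> {0..<T} \<Longrightarrow> tau t = \<kappa> / (2 * h) * ln (T / (T - t)) + tau 0"
    using form by blast+
  have lpos: "\<forall>t \<in> {0..<T}. lam t > 0" using lam_eq h by simp
  have dl: "\<forall>t \<in> {0..<T}. (lam has_real_derivative h * lam t ^ 3) (at t within {0..<T})"
  proof
    fix t assume t: "t \<in> {0..<T}"
    have "((\<lambda>s. 1 / sqrt (2 * h * (T - s))) has_real_derivative h * lam t ^ 3) (at t)"
      using has_real_derivative_blowup_rate[OF h, of t T] lam_eq[OF t] t by simp
    then have "((\<lambda>s. 1 / sqrt (2 * h * (T - s))) has_real_derivative h * lam t ^ 3) (at t within {0..<T})"
      by (rule has_field_derivative_at_within)
    then show "(lam has_real_derivative h * lam t ^ 3) (at t within {0..<T})"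
      by (rule has_field_derivative_transform_within[OF _ zero_less_one t]) (simp add: lam_eq)
  qed
  have dtau: "\<forall>t \<in> {0..<T}. (tau has_real_derivative \<kappa> * (lam t)\<^sup>2) (at t within {0..<T})"
  proof
    fix t assume t: "t \<in> {0..<T}"
    have "\<kappa> / (2 * h) * (1 / (T - t)) = \<kappa> * (lam t)\<^sup>2"
      using lam_eq[OF t] t h by (simp add: power_divide)
    moreover have "((\<lambda>s. \<kappa> / (2 * h) * ln (T / (T - s)) + tau 0) has_real_derivative
        \<kappa> / (2 * h) * (1 / (T - t)) + 0) (at t)"
      using t by (intro DERIV_add DERIV_cmult has_real_derivative_log_phase[OF T] DERIV_const) simp
    ultimately have "((\<lambda>s. \<kappa> / (2 * h) * ln (T / (T - s)) + tau 0) has_real_derivative \<kappa> * (lam t)\<^sup>2)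
        (at t within {0..<T})"
      by (simp add: has_field_derivative_at_within)
    then show "(tau has_real_derivative \<kappa> * (lam t)\<^sup>2) (at t within {0..<T})"
      by (rule has_field_derivative_transform_within[OF _ zero_less_one t]) (metis tau_eq)
  qed
  have "solves_dNLS p T (self_similar (1 / (p - 1)) lam tau f)"
    unfolding solves_dNLS_self_similar_iff[OF T q lpos dl dtau]
    using stat lpos unfolding solves_stationary_iff[OF p[THEN less_imp_neq, symmetric]] by auto
  moreover have "filterlim lam at_top (at_left T)"
  proof (rule filterlim_cong[THEN iffD1, OF refl refl _ filterlim_blowup_rate[OF h]])
    show "\<forall>\<^sub>F s in at_left T. 1 / sqrt (2 * h * (T - s)) = lam s"
      using eventually_at_left_real[OF T] by eventually_elim (simp add: lam_eq)
  qed
  ultimately show ?thesis ..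
qed

theorem theorem1p1:
  fixes p T :: real and lam tau :: "real \<Rightarrow> real" and eta :: "real \<Rightarrow> complex"
  assumes "p > 3" and "T > 0"
    and "\<forall>t \<in> {0..<T}. lam t > 0"
    and "\<forall>t \<in> {0..<T}. lam differentiable (at t within {0..<T})"
    and "\<forall>t \<in> {0..<T}. tau differentiable (at t within {0..<T})"
    and "eta \<noteq> (\<lambda>_. 0)"
  shows "(solves_dNLS p T
            (\<lambda>x t. complex_of_real (lam t powr (1 / (p - 1))) * exp (\<i> * complex_of_real (tau t))
                     * eta (lam t * x))
          \<and> filterlim lam at_top (at_left T))
     \<longleftrightarrow> (\<exists>h > 0. \<exists>\<kappa>::real.
            (\<forall>t \<in> {0..<T}. lam t = 1 / sqrt (2 * h * (T - t)) \<and>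
                            tau t = \<kappa> / (2 * h) * ln (T / (T - t)) + tau 0)
            \<and> solves_stationary p \<kappa> h eta)"
proof -
  have p: "p > 1" using assms(1) by simp
  obtain lam' tau' where
      dl: "\<forall>t \<in> {0..<T}. (lam has_real_derivative lam' t) (at t within {0..<T})"
    and dtau: "\<forall>t \<in> {0..<T}. (tau has_real_derivative tau' t) (at t within {0..<T})"
    using assms(4,5) unfolding real_differentiable_def by metis
  show ?thesis
    unfolding self_similar_def[symmetric]
    using self_similar_blowup_imp_stationary[OF p assms(2,3) dl dtau assms(6)]
      stationary_imp_self_similar_blowup[OF p assms(2)] by blast
qed

end
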